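(* For any $k\ge1$ and any $k$-dimensional convex polytope $P$ that has an insphere, letting $x$ be the radius of the insphere, for every integer $n\ge1$ we have $Disp(n;P)=\frac{2x\,DP(n;P)}{x+DP(n;P)}$.
   Context: A $k$-dimensional convex polytope has an insphere if the largest ball contained in $P$ is tangent to all facets of $P$. Distances are Euclidean. $Disp(n;P)=\max_{X_1,\dots,X_n\in P}\min\{dis(X_i,\partial P),dis(X_i,X_j):i\ne j\}$. For $r\ge0$, $Pack(r;P)$ is the maximum number of pairwise non-overlapping balls of radius $r$ contained in $P$, and $DP(n;P)=\max\{r:Pack(r;P)\ge n\}$. *)

theory Defs
  imports "HOL-Analysis.Analysis" "HOL-Library.Extended_Nat"
begin

definition has_insphere :: "'a::euclidean_space set \<Rightarrow> real \<Rightarrow> bool" where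
  "has_insphere P x \<longleftrightarrow>
     (\<exists>c. cball c x \<subseteq> P
        \<and> (\<forall>c' r. cball c' r \<subseteq> P \<longrightarrow> r \<le> x)
        \<and> (\<forall>F. F facet_of P \<longrightarrow> cball c x \<inter> F \<noteq> {}))"

definition Disp :: "nat \<Rightarrow> 'a::euclidean_space set \<Rightarrow> real" where
  "Disp n P = Sup {Min ({infdist (X i) (frontier P) | i. i < n}
                       \<union> {dist (X i) (X j) | i j. i < n \<and> j < n \<and> i \<noteq> j})
                   | X. \<forall>i<n. X i \<in> P}"

definition Pack :: "real \<Rightarrow> 'a::euclidean_space set \<Rightarrow> enat" where
  "Pack r P = Sup {enat (card C) | C. finite C \<and> (\<forall>c\<in>C. cball c r \<subseteq> P)
                     \<and> (\<forall>c\<in>C. \<forall>d\<in>C. c \<noteq> d \<longrightarrow> ball c r \<inter> ball d r = {})}"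

definition DP :: "nat \<Rightarrow> 'a::euclidean_space set \<Rightarrow> real" where
  "DP n P = Sup {r. r \<ge> 0 \<and> Pack r P \<ge> enat n}"

end

theory Submission
  imports Defs
begin

text \<open>The insphere, of radius x and centre c, touches every facet of P, so every facet
  hyperplane lies at distance x from c. Consequently the homothety with centre c and ratio
  \<mu> \<ge> 0 maps a ball of radius t inside P onto a ball of radius \<mu> t + (1 - \<mu>) x inside P.
  Since a ball about a point of P lies in P exactly when its radius is at most the distance
  to the boundary, shrinking the centres of n disjoint balls of radius r by \<mu> = x / (x + r)
  yields n points whose mutual and boundary distances are at least 2 x r / (x + r), and
  conversely expanding a configuration of dispersion d by (x + r) / x, with
  r = d x / (2 x - d), yields n disjoint balls of radius r. As r \<mapsto> 2 x r / (x + r) is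
  increasing, this transfers the supremum defining DP to the one defining Disp.\<close>

lemma disjoint_balls_iff_dist:
  fixes a b :: "'a::real_normed_vector"
  assumes "r \<ge> 0"
  shows "ball a r \<inter> ball b r = {} \<longleftrightarrow> 2 * r \<le> dist a b"
proof
  assume disj: "ball a r \<inter> ball b r = {}"
  show "2 * r \<le> dist a b"
  proof (rule ccontr)
    assume "\<not> 2 * r \<le> dist a b"
    then have "midpoint a b \<in> ball a r \<inter> ball b r"
      by (auto simp: dist_midpoint)
    with disj show False by blast
  qed
next
  assume "2 * r \<le> dist a b"
  then show "ball a r \<inter> ball b r = {}" by (intro disjoint_ballI) simp
qed

lemma cball_subset_iff_infdist_frontier:
  fixes P :: "'a::euclidean_space set"
  assumes "closed P" "P \<noteq> UNIV" "r \<ge> 0"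
  shows "cball p r \<subseteq> P \<longleftrightarrow> p \<in> P \<and> r \<le> infdist p (frontier P)"
proof
  assume sub: "cball p r \<subseteq> P"
  then have pP: "p \<in> P" using assms(3) by auto
  have "r \<le> dist p q" if q: "q \<in> frontier P" for q
  proof (rule ccontr)
    assume "\<not> r \<le> dist p q"
    then have "q \<in> ball p r" by simp
    moreover have "ball p r \<subseteq> P" using sub ball_subset_cball by blast
    then have "ball p r \<subseteq> interior P" by (simp add: interior_maximal)
    ultimately have "q \<in> interior P" by blast
    with q show False by (simp add: frontier_def)
  qed
  moreover have "frontier P \<noteq> {}" using frontier_not_empty[OF _ assms(2)] pP by blast
  ultimately show "p \<in> P \<and> r \<le> infdist p (frontier P)"
    using pP by (simp add: infdist_notempty cINF_greatest)
next
  assume "p \<in> P \<and> r \<le> infdist p (frontier P)"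
  then have pP: "p \<in> P" and r: "r \<le> infdist p (frontier P)" by auto
  show "cball p r \<subseteq> P"
  proof
    fix q assume q: "q \<in> cball p r"
    show "q \<in> P"
    proof (rule ccontr)
      assume qP: "q \<notin> P"
      obtain z where z: "z \<in> closed_segment p q" "z \<in> frontier P"
        using connected_Int_frontier[of "closed_segment p q" P] pP qP by blast
      have "z \<in> P" using z(2) assms(1) frontier_subset_closed by blast
      then have "z \<noteq> q" using qP by blast
      moreover have "z \<noteq> p"
      proof
        assume "z = p"
        then have "r \<le> 0" using r z(2) infdist_le[of p "frontier P" p] by simp
        then show False using q qP pP assms(3) by simp
      qed
      ultimately have "z \<in> open_segment p q" using z(1) by (simp add: open_segment_def)
      then have "dist z p < dist p q" by (simp add: dist_in_open_segment)
      also have "\<dots> \<le> r" using q by simp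
      also have "\<dots> \<le> dist p z" using r infdist_le[OF z(2), of p] by simp
      finally show False by (simp add: dist_commute)
    qed
  qed
qed

definition dispersion :: "nat \<Rightarrow> 'a::euclidean_space set \<Rightarrow> (nat \<Rightarrow> 'a) \<Rightarrow> real" where
  "dispersion n P X = Min ({infdist (X i) (frontier P) | i. i < n}
                            \<union> {dist (X i) (X j) | i j. i < n \<and> j < n \<and> i \<noteq> j})"

lemma Disp_eq_Sup_dispersion: "Disp n P = Sup {dispersion n P X | X. \<forall>i<n. X i \<in> P}"
  by (simp add: Disp_def dispersion_def)

lemma le_dispersion_iff:
  assumes "n \<ge> 1"
  shows "d \<le> dispersion n P X \<longleftrightarrow>
           (\<forall>i<n. d \<le> infdist (X i) (frontier P))
         \<and> (\<forall>i<n. \<forall>j<n. i \<noteq> j \<longrightarrow> d \<le> dist (X i) (X j))"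
proof -
  have "{dist (X i) (X j) | i j. i < n \<and> j < n \<and> i \<noteq> j}
          \<subseteq> (\<lambda>(i, j). dist (X i) (X j)) ` ({..<n} \<times> {..<n})" by auto
  then have "finite {dist (X i) (X j) | i j. i < n \<and> j < n \<and> i \<noteq> j}"
    by (rule finite_subset) simp
  moreover have "{infdist (X i) (frontier P) | i. i < n} \<noteq> {}" using assms by (auto intro!: exI[of _ 0])
  ultimately show ?thesis
    unfolding dispersion_def by (subst Min_ge_iff) auto
qed

lemma enat_le_Pack_iff:
  fixes P :: "'a::euclidean_space set"
  assumes "r \<ge> 0"
  shows "enat n \<le> Pack r P \<longleftrightarrow>
           (\<exists>Y. inj_on Y {..<n} \<and> (\<forall>i<n. cball (Y i) r \<subseteq> P)
              \<and> (\<forall>i<n. \<forall>j<n. i \<noteq> j \<longrightarrow> 2 * r \<le> dist (Y i) (Y j)))"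
    (is "_ \<longleftrightarrow> (\<exists>Y. ?packing Y)")
proof -
  define packings where "packings = {C. finite C \<and> (\<forall>c\<in>C. cball c r \<subseteq> P)
                     \<and> (\<forall>c\<in>C. \<forall>d\<in>C. c \<noteq> d \<longrightarrow> ball c r \<inter> ball d r = {})}"
  have Pack_eq: "Pack r P = (SUP C\<in>packings. enat (card C))"
    unfolding Pack_def packings_def image_def by (rule arg_cong[where f = Sup]) blast
  have "enat n \<le> Pack r P \<longleftrightarrow> (\<exists>C\<in>packings. n \<le> card C)"
  proof (cases n)
    case (Suc m)
    then show ?thesis unfolding Pack_eq by (simp add: Suc_ile_eq less_Sup_iff Suc_le_eq)
  next
    case 0
    have "{} \<in> packings" by (simp add: packings_def)
    then show ?thesis using 0 by (auto simp: zero_enat_def[symmetric])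
  qed
  also have "\<dots> \<longleftrightarrow> (\<exists>Y. ?packing Y)"
  proof
    assume "\<exists>C\<in>packings. n \<le> card C"
    then obtain C where C: "C \<in> packings" "n \<le> card C" by blast
    then obtain Y where Y: "Y ` {..<n} \<subseteq> C" "inj_on Y {..<n}"
      using card_le_inj[of "{..<n}" C] by (auto simp: packings_def)
    have "2 * r \<le> dist (Y i) (Y j)" if "i < n" "j < n" "i \<noteq> j" for i j
    proof -
      have "Y i \<in> C" "Y j \<in> C" "Y i \<noteq> Y j" using Y that by (auto simp: inj_on_def)
      then have "ball (Y i) r \<inter> ball (Y j) r = {}" using C(1) unfolding packings_def by blast
      then show ?thesis using disjoint_balls_iff_dist[OF assms] by blast
    qed
    moreover have "cball (Y i) r \<subseteq> P" if "i < n" for i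
      using C(1) Y(1) that unfolding packings_def by blast
    ultimately show "\<exists>Y. ?packing Y" using Y(2) by blast
  next
    assume "\<exists>Y. ?packing Y"
    then obtain Y where Y: "?packing Y" ..
    have "ball c r \<inter> ball d r = {}"
      if cd: "c \<in> Y ` {..<n}" "d \<in> Y ` {..<n}" "c \<noteq> d" for c d
    proof -
      obtain i j where "i < n" "j < n" "i \<noteq> j" "c = Y i" "d = Y j" using cd by blast
      then show ?thesis using Y disjoint_balls_iff_dist[OF assms] by blast
    qed
    then have "Y ` {..<n} \<in> packings" using Y unfolding packings_def by blast
    moreover have "card (Y ` {..<n}) = n" using Y card_image by fastforce
    ultimately show "\<exists>C\<in>packings. n \<le> card C" by force
  qed
  finally show ?thesis .
qed

lemma enat_le_Pack_zero:
  fixes P :: "'a::euclidean_space set"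
  assumes "infinite P"
  shows "enat n \<le> Pack 0 P"
proof -
  obtain C where C: "finite C" "card C = n" "C \<subseteq> P"
    using infinite_arbitrarily_large[OF assms] by blast
  then obtain Y where "bij_betw Y {..<n} C"
    using ex_bij_betw_nat_finite[OF C(1)] by (auto simp: atLeast0LessThan)
  then show ?thesis
    using C(3) by (subst enat_le_Pack_iff) (auto simp: bij_betw_def)
qed

lemma harmonic_mean_le_iff:
  fixes x r v :: real
  assumes "x > 0" "r \<ge> 0" "v < 2 * x"
  shows "2 * x * r / (x + r) \<le> v \<longleftrightarrow> r \<le> v * x / (2 * x - v)"
  using assms by (simp add: field_simps)

lemma le_harmonic_mean_iff:
  fixes x r v :: real
  assumes "x > 0" "r \<ge> 0" "v < 2 * x"
  shows "v \<le> 2 * x * r / (x + r) \<longleftrightarrow> v * x / (2 * x - v) \<le> r"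
  using assms by (simp add: field_simps)

lemma cSup_eq_harmonic_mean:
  fixes x :: real and S V :: "real set"
  assumes x: "x > 0" and "S \<noteq> {}" and S_nonneg: "\<forall>r\<in>S. 0 \<le> r" and V_le: "\<forall>v\<in>V. v \<le> x"
    and up: "\<forall>r\<in>S. \<exists>v\<in>V. 2 * x * r / (x + r) \<le> v"
    and down: "\<forall>v\<in>V. 0 < v \<longrightarrow> v * x / (2 * x - v) \<in> S"
  shows "Sup V = 2 * x * Sup S / (x + Sup S)"
proof -
  have "V \<noteq> {}" using up \<open>S \<noteq> {}\<close> by blast
  have bdd_V: "bdd_above V" using V_le by (intro bdd_aboveI) blast
  have "Sup V \<le> x" using V_le \<open>V \<noteq> {}\<close> by (intro cSup_least) auto
  have S_le: "r \<le> x" if r: "r \<in> S" for r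
  proof -
    obtain v where v: "v \<in> V" "2 * x * r / (x + r) \<le> v" using up r by blast
    have "v \<le> x" using V_le v(1) by blast
    then show ?thesis using harmonic_mean_le_iff[of x r x] x S_nonneg r v(2) by simp
  qed
  then have bdd_S: "bdd_above S" by (intro bdd_aboveI) blast
  obtain r0 where "r0 \<in> S" using \<open>S \<noteq> {}\<close> by blast
  then have "0 \<le> Sup S" using S_nonneg cSup_upper[OF _ bdd_S] by (meson order_trans)
  show ?thesis
  proof (rule antisym)
    show "Sup V \<le> 2 * x * Sup S / (x + Sup S)"
    proof (rule cSup_least[OF \<open>V \<noteq> {}\<close>])
      fix v assume v: "v \<in> V"
      show "v \<le> 2 * x * Sup S / (x + Sup S)"
      proof (cases "0 < v")
        case True
        then have "v * x / (2 * x - v) \<le> Sup S" using down v cSup_upper[OF _ bdd_S] by blast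
        moreover have "v < 2 * x" using V_le v x by fastforce
        ultimately show ?thesis using le_harmonic_mean_iff[of x "Sup S" v] x \<open>0 \<le> Sup S\<close> by blast
      next
        case False
        moreover have "0 \<le> 2 * x * Sup S / (x + Sup S)" using x \<open>0 \<le> Sup S\<close> by simp
        ultimately show ?thesis by linarith
      qed
    qed
    have "Sup S \<le> Sup V * x / (2 * x - Sup V)"
    proof (rule cSup_least[OF \<open>S \<noteq> {}\<close>])
      fix r assume r: "r \<in> S"
      then obtain v where v: "v \<in> V" "2 * x * r / (x + r) \<le> v" using up by blast
      then have "2 * x * r / (x + r) \<le> Sup V" using cSup_upper[OF v(1) bdd_V] by linarith
      then show "r \<le> Sup V * x / (2 * x - Sup V)"
        using harmonic_mean_le_iff[of x r "Sup V"] x S_nonneg r \<open>Sup V \<le> x\<close> by simp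
    qed
    then show "2 * x * Sup S / (x + Sup S) \<le> Sup V"
      using harmonic_mean_le_iff[of x "Sup S" "Sup V"] x \<open>0 \<le> Sup S\<close> \<open>Sup V \<le> x\<close> by simp
  qed
qed

lemma dist_homothety:
  fixes c p q :: "'a::real_normed_vector"
  assumes "\<mu> \<ge> 0"
  shows "dist (c + \<mu> *\<^sub>R (p - c)) (c + \<mu> *\<^sub>R (q - c)) = \<mu> * dist p q"
proof -
  have "(c + \<mu> *\<^sub>R (p - c)) - (c + \<mu> *\<^sub>R (q - c)) = \<mu> *\<^sub>R (p - q)"
    by (simp add: algebra_simps)
  then show ?thesis using assms by (simp add: dist_norm)
qed

locale tangential_polyhedron =
  fixes P :: "'a::euclidean_space set" and I :: "'i set" and A :: "'i \<Rightarrow> 'a" and B :: "'i \<Rightarrow> real"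
    and c :: 'a and x :: real
  assumes P_eq: "P = {y. \<forall>i\<in>I. A i \<bullet> y \<le> B i}"
    and unit_normal: "i \<in> I \<Longrightarrow> norm (A i) = 1"
    and tangent: "i \<in> I \<Longrightarrow> A i \<bullet> c + x = B i"
    and inradius_pos: "0 < x"
    and inradius_max: "cball c' r \<subseteq> P \<Longrightarrow> r \<le> x"
begin

lemma closed_P: "closed P"
proof -
  have "P = (\<Inter>i\<in>I. {y. A i \<bullet> y \<le> B i})" by (auto simp: P_eq)
  then show ?thesis by (simp add: closed_INT closed_halfspace_le)
qed

lemma cball_subset_iff_margin:
  assumes "r \<ge> 0"
  shows "cball p r \<subseteq> P \<longleftrightarrow> (\<forall>i\<in>I. A i \<bullet> p + r \<le> B i)"
proof
  assume sub: "cball p r \<subseteq> P"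
  show "\<forall>i\<in>I. A i \<bullet> p + r \<le> B i"
  proof
    fix i assume i: "i \<in> I"
    have "p + r *\<^sub>R A i \<in> cball p r" using unit_normal[OF i] assms by (simp add: dist_norm)
    then have "A i \<bullet> (p + r *\<^sub>R A i) \<le> B i" using sub i by (auto simp: P_eq)
    moreover have "A i \<bullet> A i = 1" using unit_normal[OF i] by (simp add: dot_square_norm)
    ultimately show "A i \<bullet> p + r \<le> B i" by (simp add: inner_add_right)
  qed
next
  assume margin: "\<forall>i\<in>I. A i \<bullet> p + r \<le> B i"
  show "cball p r \<subseteq> P"
  proof (unfold P_eq, intro subsetI CollectI ballI)
    fix q i assume q: "q \<in> cball p r" and i: "i \<in> I"
    have "A i \<bullet> (q - p) \<le> norm (A i) * norm (q - p)" by (rule norm_cauchy_schwarz)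
    also have "\<dots> \<le> r" using unit_normal[OF i] q by (simp add: dist_norm norm_minus_commute)
    finally have "A i \<bullet> q \<le> A i \<bullet> p + r" by (simp add: inner_diff_right)
    also have "\<dots> \<le> B i" using margin i by blast
    finally show "A i \<bullet> q \<le> B i" .
  qed
qed

lemma cball_subset: "cball c x \<subseteq> P"
  using tangent inradius_pos by (simp add: cball_subset_iff_margin)

lemma infinite_P: "infinite P"
proof -
  have "uncountable (cball c x)" using inradius_pos by (rule uncountable_cball)
  then have "uncountable P" using cball_subset countable_subset by blast
  then show ?thesis by (rule uncountable_infinite)
qed

lemma cball_subset_iff:
  assumes "r \<ge> 0"
  shows "cball p r \<subseteq> P \<longleftrightarrow> p \<in> P \<and> r \<le> infdist p (frontier P)"
proof (rule cball_subset_iff_infdist_frontier[OF closed_P _ assms])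
  show "P \<noteq> UNIV" using inradius_max[of c "x + 1"] by auto
qed

text \<open>Tangency of every facet is exactly what makes the homothety about c map P into itself
  with radii transformed affinely; for \<mu> > 1 it would fail for a general polytope.\<close>

lemma cball_homothety_subset:
  assumes sub: "cball p t \<subseteq> P" and "t \<ge> 0" "\<mu> \<ge> 0"
  shows "cball (c + \<mu> *\<^sub>R (p - c)) (\<mu> * t + (1 - \<mu>) * x) \<subseteq> P"
proof (cases "\<mu> * t + (1 - \<mu>) * x \<ge> 0")
  case nonneg: True
  have margin: "\<forall>i\<in>I. A i \<bullet> p + t \<le> B i"
    using sub cball_subset_iff_margin[OF \<open>t \<ge> 0\<close>] by simp
  have "\<forall>i\<in>I. A i \<bullet> (c + \<mu> *\<^sub>R (p - c)) + (\<mu> * t + (1 - \<mu>) * x) \<le> B i"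
  proof
    fix i assume i: "i \<in> I"
    have "A i \<bullet> (c + \<mu> *\<^sub>R (p - c)) + (\<mu> * t + (1 - \<mu>) * x)
          = (A i \<bullet> c + x) + \<mu> * ((A i \<bullet> p + t) - (A i \<bullet> c + x))"
      by (simp add: inner_add_right inner_diff_right algebra_simps)
    also have "\<dots> = B i + \<mu> * ((A i \<bullet> p + t) - B i)" using tangent[OF i] by simp
    also have "\<dots> \<le> B i" using margin i \<open>\<mu> \<ge> 0\<close> by (simp add: mult_nonneg_nonpos)
    finally show "A i \<bullet> (c + \<mu> *\<^sub>R (p - c)) + (\<mu> * t + (1 - \<mu>) * x) \<le> B i" .
  qed
  then show ?thesis using cball_subset_iff_margin[OF nonneg] by simp
qed simp

lemma infdist_frontier_le_inradius:
  assumes "p \<in> P"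
  shows "infdist p (frontier P) \<le> x"
proof -
  have "cball p (infdist p (frontier P)) \<subseteq> P"
    using cball_subset_iff[OF infdist_nonneg, of p p "frontier P"] assms by simp
  then show ?thesis by (rule inradius_max)
qed

lemma dispersion_le_inradius:
  assumes "n \<ge> 1" "\<forall>i<n. X i \<in> P"
  shows "dispersion n P X \<le> x"
proof -
  have "dispersion n P X \<le> infdist (X 0) (frontier P)"
    using le_dispersion_iff[OF assms(1), of "dispersion n P X" P X] assms(1) by simp
  also have "\<dots> \<le> x" using infdist_frontier_le_inradius assms by simp
  finally show ?thesis .
qed

lemma dispersion_of_packing:
  assumes "n \<ge> 1" "r \<ge> 0" "enat n \<le> Pack r P"
  shows "\<exists>X. (\<forall>i<n. X i \<in> P) \<and> 2 * x * r / (x + r) \<le> dispersion n P X"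
proof -
  obtain Y where Y_in: "\<forall>i<n. cball (Y i) r \<subseteq> P"
    and Y_sep: "\<forall>i<n. \<forall>j<n. i \<noteq> j \<longrightarrow> 2 * r \<le> dist (Y i) (Y j)"
    using assms(3) unfolding enat_le_Pack_iff[OF assms(2)] by blast
  define \<mu> where "\<mu> = x / (x + r)"
  define X where "X i = c + \<mu> *\<^sub>R (Y i - c)" for i
  define d where "d = 2 * x * r / (x + r)"
  have "\<mu> \<ge> 0" "d \<ge> 0" using inradius_pos assms(2) by (simp_all add: \<mu>_def d_def)
  have "x + r > 0" using inradius_pos assms(2) by simp
  then have "\<mu> * r + (1 - \<mu>) * x = d" by (simp add: \<mu>_def d_def divide_simps)
  then have "cball (X i) d \<subseteq> P" if "i < n" for i
    using cball_homothety_subset[of "Y i" r \<mu>] Y_in that assms(2) \<open>\<mu> \<ge> 0\<close> by (simp add: X_def)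
  then have X_in: "X i \<in> P" and "d \<le> infdist (X i) (frontier P)" if "i < n" for i
    using cball_subset_iff \<open>d \<ge> 0\<close> that by blast+
  moreover have "d \<le> dist (X i) (X j)" if "i < n" "j < n" "i \<noteq> j" for i j
  proof -
    have "d = \<mu> * (2 * r)" using inradius_pos assms(2) by (simp add: \<mu>_def d_def)
    also have "\<dots> \<le> \<mu> * dist (Y i) (Y j)" using Y_sep that \<open>\<mu> \<ge> 0\<close> by (simp add: mult_left_mono)
    also have "\<dots> = dist (X i) (X j)"
      unfolding X_def by (rule dist_homothety[symmetric, OF \<open>\<mu> \<ge> 0\<close>])
    finally show ?thesis .
  qed
  ultimately show ?thesis
    using assms(1) by (intro exI[of _ X]) (simp add: le_dispersion_iff d_def)
qed

lemma packing_of_dispersion: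
  assumes "n \<ge> 1" "\<forall>i<n. X i \<in> P" "0 < dispersion n P X"
  shows "enat n \<le> Pack (dispersion n P X * x / (2 * x - dispersion n P X)) P"
proof -
  define d where "d = dispersion n P X"
  define r where "r = d * x / (2 * x - d)"
  define l where "l = (x + r) / x"
  define Y where "Y i = c + l *\<^sub>R (X i - c)" for i
  have "d \<le> x" using dispersion_le_inradius[OF assms(1,2)] by (simp add: d_def)
  then have "r > 0" "l \<ge> 0" using assms(3) inradius_pos by (simp_all add: d_def r_def l_def)
  have d_le: "d \<le> infdist (X i) (frontier P)" "\<forall>j<n. i \<noteq> j \<longrightarrow> d \<le> dist (X i) (X j)"
    if "i < n" for i
    using le_dispersion_iff[OF assms(1), of d P X] that by (simp_all add: d_def)
  have "2 * x - d > 0" using \<open>d \<le> x\<close> inradius_pos by simp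
  then have radius: "l * d + (1 - l) * x = r" and diameter: "l * d = 2 * r"
    using inradius_pos by (simp_all add: r_def l_def divide_simps) (simp_all add: algebra_simps)
  have Y_in: "cball (Y i) r \<subseteq> P" if "i < n" for i
  proof -
    have "cball (X i) d \<subseteq> P"
      using cball_subset_iff assms(2,3) d_le(1)[OF that] that by (simp add: d_def)
    then show ?thesis
      using cball_homothety_subset[of "X i" d l] assms(3) \<open>l \<ge> 0\<close>
      unfolding d_def[symmetric] by (simp add: Y_def radius)
  qed
  have Y_sep: "2 * r \<le> dist (Y i) (Y j)" if "i < n" "j < n" "i \<noteq> j" for i j
  proof -
    have "2 * r = l * d" using diameter by simp
    also have "\<dots> \<le> l * dist (X i) (X j)"
      using d_le(2)[OF that(1)] that \<open>l \<ge> 0\<close> by (simp add: mult_left_mono)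
    also have "\<dots> = dist (Y i) (Y j)"
      unfolding Y_def by (rule dist_homothety[symmetric, OF \<open>l \<ge> 0\<close>])
    finally show ?thesis .
  qed
  then have "inj_on Y {..<n}" using \<open>r > 0\<close> by (force intro: inj_onI)
  then have "enat n \<le> Pack r P"
    unfolding enat_le_Pack_iff[OF less_imp_le[OF \<open>r > 0\<close>]]
    using Y_in Y_sep by (intro exI[of _ Y] conjI allI impI) simp_all
  then show ?thesis by (simp add: r_def d_def)
qed

theorem Disp_eq_harmonic_mean_DP:
  assumes "n \<ge> 1"
  shows "Disp n P = 2 * x * DP n P / (x + DP n P)"
proof -
  define V where "V = {dispersion n P X | X. \<forall>i<n. X i \<in> P}"
  define S where "S = {r. r \<ge> 0 \<and> Pack r P \<ge> enat n}"
  have "Sup V = 2 * x * Sup S / (x + Sup S)"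
  proof (rule cSup_eq_harmonic_mean)
    show "S \<noteq> {}" using enat_le_Pack_zero[OF infinite_P] by (auto simp: S_def)
    show "\<forall>v\<in>V. v \<le> x" using dispersion_le_inradius[OF assms] by (auto simp: V_def)
    show "\<forall>r\<in>S. \<exists>v\<in>V. 2 * x * r / (x + r) \<le> v"
    proof
      fix r assume "r \<in> S"
      then obtain X where "\<forall>i<n. X i \<in> P" "2 * x * r / (x + r) \<le> dispersion n P X"
        using dispersion_of_packing[OF assms] by (auto simp: S_def)
      then show "\<exists>v\<in>V. 2 * x * r / (x + r) \<le> v" unfolding V_def by blast
    qed
    show "\<forall>v\<in>V. 0 < v \<longrightarrow> v * x / (2 * x - v) \<in> S"
    proof (intro ballI impI)
      fix v assume "v \<in> V" "0 < v"
      then obtain X where X: "\<forall>i<n. X i \<in> P" "v = dispersion n P X" by (auto simp: V_def)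
      then have "v \<le> x" using dispersion_le_inradius[OF assms] by simp
      then show "v * x / (2 * x - v) \<in> S"
        using packing_of_dispersion[OF assms X(1)] X(2) \<open>0 < v\<close> inradius_pos by (simp add: S_def)
    qed
  qed (auto simp: S_def inradius_pos)
  then show ?thesis by (simp add: Disp_eq_Sup_dispersion DP_def V_def S_def)
qed

end

lemma halfspace_tangent_to_cball:
  fixes a c :: "'a::real_inner"
  assumes "norm a = 1" and inside: "cball c x \<subseteq> {y. a \<bullet> y \<le> b}"
    and touch: "cball c x \<inter> {y. a \<bullet> y = b} \<noteq> {}"
  shows "a \<bullet> c + x = b"
proof -
  obtain z where "z \<in> cball c x" "a \<bullet> z = b" using touch by blast
  then have z: "dist c z \<le> x" "a \<bullet> z = b" by simp_all
  then have "x \<ge> 0" using zero_le_dist order_trans by blast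
  then have "c + x *\<^sub>R a \<in> cball c x" using assms(1) by (simp add: dist_norm)
  then have "a \<bullet> (c + x *\<^sub>R a) \<le> b" using inside by blast
  moreover have "a \<bullet> a = 1" using assms(1) by (simp add: dot_square_norm)
  ultimately have "a \<bullet> c + x \<le> b" by (simp add: inner_add_right)
  moreover have "a \<bullet> (z - c) \<le> norm a * norm (z - c)" by (rule norm_cauchy_schwarz)
  then have "b \<le> a \<bullet> c + x"
    using z assms(1) by (simp add: inner_diff_right dist_norm norm_minus_commute)
  ultimately show ?thesis by linarith
qed

lemma full_dim_polyhedron_unit_facet_normals:
  fixes P :: "'a::euclidean_space set"
  assumes "polyhedron P" and "aff_dim P = int DIM('a)"
  obtains I :: "'a set set" and A :: "'a set \<Rightarrow> 'a" and B :: "'a set \<Rightarrow> real"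
  where "P = {y. \<forall>i\<in>I. A i \<bullet> y \<le> B i}" and "\<And>i. i \<in> I \<Longrightarrow> norm (A i) = 1"
    and "\<And>i. i \<in> I \<Longrightarrow> (P \<inter> {y. A i \<bullet> y = B i}) facet_of P"
proof -
  have hull: "affine hull P = UNIV" using assms(2) aff_dim_eq_full by blast
  obtain F where "finite F" and seq: "P = affine hull P \<inter> \<Inter>F"
    and "\<And>h. h \<in> F \<Longrightarrow> \<exists>a b. a \<noteq> 0 \<and> h = {x. a \<bullet> x \<le> b}"
    and min: "\<And>F'. F' \<subset> F \<Longrightarrow> P \<subset> affine hull P \<inter> \<Inter>F'"
    using assms(1) by (simp add: polyhedron_Int_affine_minimal) meson
  then obtain a b where ab: "\<And>h. h \<in> F \<Longrightarrow> a h \<noteq> 0 \<and> h = {x. a h \<bullet> x \<le> b h}"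
    by metis
  define A where "A h = a h /\<^sub>R norm (a h)" for h
  define B where "B h = b h / norm (a h)" for h
  have normalize: "a h \<bullet> y \<le> b h \<longleftrightarrow> A h \<bullet> y \<le> B h" "a h \<bullet> y = b h \<longleftrightarrow> A h \<bullet> y = B h"
    if "h \<in> F" for h y
  proof -
    have "norm (a h) > 0" using ab[OF that] by simp
    then show "a h \<bullet> y \<le> b h \<longleftrightarrow> A h \<bullet> y \<le> B h" "a h \<bullet> y = b h \<longleftrightarrow> A h \<bullet> y = B h"
      by (simp_all add: A_def B_def field_simps)
  qed
  show thesis
  proof
    have "P = \<Inter>F" using seq hull by simp
    also have "\<dots> = {y. \<forall>h\<in>F. A h \<bullet> y \<le> B h}" using ab normalize by blast
    finally show "P = {y. \<forall>h\<in>F. A h \<bullet> y \<le> B h}" .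
    show "norm (A h) = 1" if "h \<in> F" for h using ab[OF that] by (simp add: A_def)
    show "(P \<inter> {y. A h \<bullet> y = B h}) facet_of P" if "h \<in> F" for h
      using facet_of_polyhedron_explicit[OF \<open>finite F\<close> seq ab min] normalize(2) that by blast
  qed
qed

lemma full_dim_convex_contains_cball:
  fixes P :: "'a::euclidean_space set"
  assumes "convex P" and "aff_dim P = int DIM('a)"
  obtains c r where "r > 0" and "cball c r \<subseteq> P"
proof -
  have "P \<noteq> {}" using assms(2) by auto
  then have "interior P \<noteq> {}"
    using assms by (simp add: interior_rel_interior_gen rel_interior_eq_empty)
  then obtain c e where "e > 0" "ball c e \<subseteq> P" using mem_interior by blast
  moreover have "cball c (e / 2) \<subseteq> ball c e" using \<open>e > 0\<close> by (simp add: cball_subset_ball_iff)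
  ultimately show thesis using that[of "e / 2" c] by auto
qed

theorem claim3:
  fixes P :: "'a::euclidean_space set" and x :: real and n :: nat
  assumes "polytope P" and "aff_dim P = int DIM('a)"
    and "has_insphere P x"
    and "n \<ge> 1"
  shows "Disp n P = 2 * x * DP n P / (x + DP n P)"
proof -
  obtain c where inball: "cball c x \<subseteq> P" and maximal: "\<forall>c' r. cball c' r \<subseteq> P \<longrightarrow> r \<le> x"
    and touch: "\<forall>F. F facet_of P \<longrightarrow> cball c x \<inter> F \<noteq> {}"
    using assms(3) unfolding has_insphere_def by blast
  have "polyhedron P" using assms(1) by (rule polytope_imp_polyhedron)
  obtain I :: "'a set set" and A B where P_eq: "P = {y. \<forall>i\<in>I. A i \<bullet> y \<le> B i}"
    and unit: "\<And>i. i \<in> I \<Longrightarrow> norm (A i) = 1"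
    and facet: "\<And>i. i \<in> I \<Longrightarrow> (P \<inter> {y. A i \<bullet> y = B i}) facet_of P"
    using full_dim_polyhedron_unit_facet_normals[OF \<open>polyhedron P\<close> assms(2)] by blast
  obtain c0 r0 where "r0 > 0" "cball c0 r0 \<subseteq> P"
    using polyhedron_imp_convex[OF \<open>polyhedron P\<close>] assms(2) by (rule full_dim_convex_contains_cball)
  then have "x > 0" using maximal by fastforce
  have "A i \<bullet> c + x = B i" if "i \<in> I" for i
  proof (rule halfspace_tangent_to_cball[OF unit[OF that]])
    show "cball c x \<subseteq> {y. A i \<bullet> y \<le> B i}" using inball that by (auto simp: P_eq)
    show "cball c x \<inter> {y. A i \<bullet> y = B i} \<noteq> {}" using touch facet[OF that] by blast
  qed
  then interpret tangential_polyhedron P I A B c x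
    using P_eq unit \<open>x > 0\<close> maximal by unfold_locales auto
  show ?thesis using assms(4) by (rule Disp_eq_harmonic_mean_DP)
qed

end
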